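(* Fix a test policy $\pi$ and initial condition $\xi\in\mathcal X$, and suppose there is $L_\pi\ge0$ with $\|\bar\pi(x)-\bar\pi(y)\|\le L_\pi\|x-y\|$ for all $x,y$ and $\bar\pi\in\{\pi,\pi_\star\}$. Let $f^{cl}_{\pi_\star}$ be $\eta$-locally $\delta$-ISS for some $\eta>0$, and assume its gain $\gamma$ satisfies $\gamma(x)\le O(x^{1+r})$ as $x\to0^+$ for some $r>0$. Choose constants $\mu,\alpha>0$ such that \[2L_\pi x+(x/\mu)^{1/(1+r)}\le\gamma^{-1}(x)\quad\text{for all }0\le x\le\alpha.\] If \[\max_{0\le t\le T-1}\mu\|\Delta_t^{\pi_\star}(\xi;\pi)\|^{1+r}\le\alpha\quad\text{and}\quad\max_{0\le t\le T-1}\Big(2L_\pi\mu\|\Delta_t^{\pi_\star}(\xi;\pi)\|^{1+r}+\|\Delta_t^{\pi_\star}(\xi;\pi)\|\Big)\le\eta,\] then for all $1\le t\le T$, \[\|x_t^{\pi_\star}(\xi)-x_t^\pi(\xi)\|\le\max_{0\le k\le t-1}\mu\|\Delta_k^{\pi_\star}(\xi;\pi)\|^{1+r}.\]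
   Context: Dynamics $x_{t+1}=f(x_t,u_t)$, $x_0=\xi$, $x_t\in\mathbb R^d,u_t\in\mathbb R^m$. For a policy $\pi$, perturbed closed loop $x_{t+1}=f^{cl}_\pi(x_t,\Delta_t):=f(x_t,\pi(x_t)+\Delta_t)$, states $x_t^\pi(\xi,\{\Delta_s\})$, $x_t^\pi(\xi):=x_t^\pi(\xi,\{0\})$. Initial conditions lie in a compact set $\mathcal X$. Norms: Euclidean for vectors, operator norm for matrices/tensors. Class $\mathcal K$: continuous, strictly increasing, vanishing at $0$; class $\mathcal{KL}$: $\beta(\cdot,t)$ class $\mathcal K$ for each $t$, $\beta(s,\cdot)$ decreasing. $f^{cl}_\pi$ is $\eta$-locally $\delta$-ISS if there are class $\mathcal{KL}$ $\beta$ and class $\mathcal K$ $\gamma$ with $\|x_t^\pi(\xi_1;\{\Delta_s\}_{s=0}^{t-1})-x_t^\pi(\xi_2;\{0\})\|\le\beta(\|\xi_1-\xi_2\|,t)+\gamma(\max_{0\le k\le t-1}\|\Delta_k\|)$ for all $\xi_1,\xi_2\in\mathcal X$, $t\in\mathbb N$, and perturbations with $\sup_t\|\Delta_t\|\le\eta$. $\gamma^{-1}$ is the inverse of $\gamma$ on its range (with $\gamma^{-1}(x)=+\infty$ for $x\ge\sup\gamma$). $\pi_\star$ is the expert policy; the discrepancy on the expert trajectory is $\Delta_t^{\pi_\star}(\xi;\pi):=\pi(x_t^{\pi_\star}(\xi))-\pi_\star(x_t^{\pi_\star}(\xi))$. *)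

theory Defs
  imports "HOL-Analysis.Analysis" "HOL-Library.Landau_Symbols"
begin

fun traj :: "('a \<Rightarrow> 'b \<Rightarrow> 'a) \<Rightarrow> ('a \<Rightarrow> 'b::real_vector) \<Rightarrow> 'a \<Rightarrow> (nat \<Rightarrow> 'b) \<Rightarrow> nat \<Rightarrow> 'a" where
  "traj f pol xi D 0 = xi"
| "traj f pol xi D (Suc t) = f (traj f pol xi D t) (pol (traj f pol xi D t) + D t)"

definition class_K :: "(real \<Rightarrow> real) \<Rightarrow> bool" where
  "class_K g \<longleftrightarrow> continuous_on {0..} g \<and> strict_mono_on {0..} g \<and> g 0 = 0"

definition class_KL :: "(real \<Rightarrow> nat \<Rightarrow> real) \<Rightarrow> bool" where
  "class_KL b \<longleftrightarrow> (\<forall>t. class_K (\<lambda>s. b s t)) \<and>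
     (\<forall>s\<ge>0. \<forall>t1 t2. t1 \<le> t2 \<longrightarrow> b s t2 \<le> b s t1)"

definition max_pert :: "(nat \<Rightarrow> 'b::real_normed_vector) \<Rightarrow> nat \<Rightarrow> real" where
  "max_pert D t = (if t = 0 then 0 else Max ((\<lambda>k. norm (D k)) ` {..<t}))"

definition local_dISS_with ::
  "('a::real_normed_vector \<Rightarrow> 'b \<Rightarrow> 'a) \<Rightarrow> ('a \<Rightarrow> 'b::real_normed_vector) \<Rightarrow> 'a set \<Rightarrow> real
     \<Rightarrow> (real \<Rightarrow> nat \<Rightarrow> real) \<Rightarrow> (real \<Rightarrow> real) \<Rightarrow> bool" where
  "local_dISS_with f pol X eta b g \<longleftrightarrow> class_KL b \<and> class_K g \<and>
     (\<forall>xi1\<in>X. \<forall>xi2\<in>X. \<forall>t. \<forall>D. (\<forall>s. norm (D s) \<le> eta) \<longrightarrow>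
        norm (traj f pol xi1 D t - traj f pol xi2 (\<lambda>_. 0) t)
          \<le> b (norm (xi1 - xi2)) t + g (max_pert D t))"

definition gamma_inv :: "(real \<Rightarrow> real) \<Rightarrow> real \<Rightarrow> ereal" where
  "gamma_inv g x = (if \<exists>s\<ge>0. g s = x then ereal (THE s. s \<ge> 0 \<and> g s = x) else \<infinity>)"

end

theory Submission
  imports Defs
begin

text \<open>The learner's trajectory \<open>y\<close> is the expert's closed loop driven by the input perturbation
  \<open>\<Delta>_k = \<pi>(y_k) - \<pi>\<^sub>\<star>(y_k)\<close>, so \<delta>-ISS with equal initial states bounds \<open>|x_t - y_t|\<close> by
  \<open>\<gamma>(max_{k<t} |\<Delta>_k|)\<close>. By Lipschitz continuity \<open>|\<Delta>_k|\<close> is at most the mismatch \<open>|\<Delta>\<^sup>\<star>_k|\<close>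
  on the expert trajectory plus \<open>2L|x_k - y_k|\<close>. By strong induction the gaps before time \<open>t\<close> are
  at most \<open>m = max_{k<t} \<mu>|\<Delta>\<^sup>\<star>_k|^(1+r)\<close>, so every \<open>|\<Delta>_k|\<close> with \<open>k < t\<close> is at most
  \<open>2Lm + (m/\<mu>)^(1/(1+r)) \<le> \<gamma>\<^sup>-\<^sup>1(m)\<close>, and the gap at time \<open>t\<close> is at most \<open>m\<close> as well. The second
  smallness hypothesis keeps all perturbations within the ISS radius \<open>\<eta>\<close>.\<close>

definition prefix_max :: "(nat \<Rightarrow> real) \<Rightarrow> nat \<Rightarrow> real" where
  "prefix_max a t = (if t = 0 then 0 else Max (a ` {..<t}))"

lemma prefix_max_0 [simp]: "prefix_max a 0 = 0"
  by (simp add: prefix_max_def)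

lemma prefix_max_ge: "k < t \<Longrightarrow> a k \<le> prefix_max a t"
  by (auto simp: prefix_max_def)

lemma prefix_max_attained:
  assumes "0 < t"
  obtains j where "j < t" and "prefix_max a t = a j"
proof -
  have "Max (a ` {..<t}) \<in> a ` {..<t}"
    using assms by (intro Max_in) auto
  then obtain j where "j < t" and "Max (a ` {..<t}) = a j"
    by blast
  with assms show thesis
    using that[of j] by (simp add: prefix_max_def)
qed

lemma prefix_max_least:
  assumes "0 \<le> c" and "\<And>k. k < t \<Longrightarrow> a k \<le> c"
  shows "prefix_max a t \<le> c"
proof (cases "t = 0")
  case False
  then show ?thesis
    using assms(2) by (simp add: prefix_max_def, intro Max.boundedI) auto
qed (simp add: \<open>0 \<le> c\<close>)

lemma prefix_max_nonneg:
  assumes "\<And>k. 0 \<le> a k"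
  shows "0 \<le> prefix_max a t"
proof (cases "t = 0")
  case False
  then show ?thesis
    using assms[of 0] prefix_max_ge[of 0 t a] by simp
qed simp

lemma prefix_max_mono:
  assumes "\<And>k. 0 \<le> a k" and "s \<le> t"
  shows "prefix_max a s \<le> prefix_max a t"
proof (rule prefix_max_least)
  show "0 \<le> prefix_max a t"
    using assms(1) by (rule prefix_max_nonneg)
  show "a k \<le> prefix_max a t" if "k < s" for k
    using that assms(2) by (intro prefix_max_ge) simp
qed

lemma prefix_max_cong:
  assumes "\<And>k. k < t \<Longrightarrow> a k = b k"
  shows "prefix_max a t = prefix_max b t"
proof -
  have "a ` {..<t} = b ` {..<t}"
    using assms by (intro image_cong) auto
  then show ?thesis
    by (simp add: prefix_max_def)
qed

lemma max_pert_eq_prefix_max: "max_pert D t = prefix_max (\<lambda>k. norm (D k)) t"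
  by (simp add: max_pert_def prefix_max_def)

text \<open>Since \<open>a\<close> grows with \<open>d\<close>, \<open>d_k + c a_j\<close> is dominated by \<open>d_k + c a_k\<close> or by \<open>d_j + c a_j\<close>.\<close>
lemma add_scaled_prefix_max_le:
  fixes a d :: "nat \<Rightarrow> real"
  assumes "0 \<le> c" and a_nonneg: "\<And>i. 0 \<le> a i"
    and a_mono: "\<And>i j. d i \<le> d j \<Longrightarrow> a i \<le> a j"
    and bound: "\<And>i. i < T \<Longrightarrow> d i + c * a i \<le> \<eta>"
    and "k < T"
  shows "d k + c * prefix_max a k \<le> \<eta>"
proof (cases "k = 0")
  case True
  then show ?thesis
    using bound[OF \<open>k < T\<close>] mult_nonneg_nonneg[OF \<open>0 \<le> c\<close> a_nonneg[of k]] by simp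
next
  case False
  then obtain j where "j < k" and j: "prefix_max a k = a j"
    using prefix_max_attained by blast
  show ?thesis
  proof (cases "d j \<le> d k")
    case True
    then have "c * a j \<le> c * a k"
      using \<open>0 \<le> c\<close> a_mono by (simp add: mult_left_mono)
    with bound[OF \<open>k < T\<close>] show ?thesis
      unfolding j by linarith
  next
    case False
    then show ?thesis
      using j bound[of j] \<open>j < k\<close> \<open>k < T\<close> by simp
  qed
qed

lemma le_root_of_scaled_powr_le:
  fixes d m mu p :: real
  assumes "0 < mu" and "0 < p" and "0 \<le> d" and "mu * d powr p \<le> m"
  shows "d \<le> (m / mu) powr (1 / p)"
proof -
  have "d = (d powr p) powr (1 / p)"
    using assms by (simp add: powr_powr)
  also have "\<dots> \<le> (m / mu) powr (1 / p)"
    using assms by (intro powr_mono2) (auto simp: field_simps)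
  finally show ?thesis .
qed

lemma le_of_le_gamma_inv:
  assumes K: "class_K g" and "0 \<le> m" and "0 \<le> z" and le: "ereal z \<le> gamma_inv g m"
  shows "g z \<le> m"
proof (rule ccontr)
  assume "\<not> g z \<le> m"
  have mono: "strict_mono_on {0..} g" and cont: "continuous_on {0..} g" and "g 0 = 0"
    using K by (auto simp: class_K_def)
  have "continuous_on {0..z} g"
    using cont by (rule continuous_on_subset) auto
  then obtain s where "0 \<le> s" "s \<le> z" and s: "g s = m"
    using IVT'[of g 0 m z] \<open>\<not> g z \<le> m\<close> \<open>0 \<le> m\<close> \<open>0 \<le> z\<close> \<open>g 0 = 0\<close> by auto
  have "(THE s. s \<ge> 0 \<and> g s = m) = s"
    using \<open>0 \<le> s\<close> s strict_mono_on_eqD[OF mono] by (intro the_equality) auto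
  then have "gamma_inv g m = ereal s"
    using \<open>0 \<le> s\<close> s by (auto simp: gamma_inv_def)
  with le have "z \<le> s"
    by simp
  then have "g z \<le> m"
    using strict_mono_on_leD[OF mono, of z s] \<open>0 \<le> z\<close> s by simp
  with \<open>\<not> g z \<le> m\<close> show False ..
qed

lemma norm_mismatch_le:
  fixes p q :: "'a::metric_space \<Rightarrow> 'b::real_normed_vector"
  assumes p: "\<And>u v. norm (p u - p v) \<le> L * dist u v"
    and q: "\<And>u v. norm (q u - q v) \<le> L * dist u v"
  shows "norm (p y - q y) \<le> norm (p x - q x) + 2 * L * dist x y"
proof -
  have "norm (p y - q x) \<le> L * dist y x + norm (p x - q x)"
    using p[of y x] by (rule norm_diff_triangle_le) simp
  then have "norm (p y - q y) \<le> L * dist y x + norm (p x - q x) + L * dist x y"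
    using q[of x y] by (rule norm_diff_triangle_le)
  then show ?thesis
    by (simp add: dist_commute)
qed

lemma traj_as_perturbed:
  assumes "\<And>k. k < t \<Longrightarrow> D k = pol (traj f pol xi (\<lambda>_. 0) k) - pol' (traj f pol xi (\<lambda>_. 0) k)"
  shows "traj f pol' xi D t = traj f pol xi (\<lambda>_. 0) t"
  using assms by (induction t) auto

lemma local_dISS_with_same_initial:
  assumes "local_dISS_with f pol X eta beta gamma" and "xi \<in> X" and "\<forall>s. norm (D s) \<le> eta"
  shows "norm (traj f pol xi D t - traj f pol xi (\<lambda>_. 0) t) \<le> gamma (max_pert D t)"
proof -
  have "beta 0 t = 0"
    using assms(1) by (simp add: local_dISS_with_def class_KL_def class_K_def)
  with assms show ?thesis
    unfolding local_dISS_with_def by (metis diff_self norm_zero add_0)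
qed

lemma local_dISS_with_policy_gap:
  fixes pol pol' :: "'a::real_normed_vector \<Rightarrow> 'b::real_normed_vector"
  assumes iss: "local_dISS_with f pol' X eta beta gamma" and "xi \<in> X" and "0 \<le> eta"
    and y: "y = traj f pol xi (\<lambda>_. 0)"
    and small: "\<And>k. k < t \<Longrightarrow> norm (pol (y k) - pol' (y k)) \<le> eta"
  shows "norm (traj f pol' xi (\<lambda>_. 0) t - y t) \<le> gamma (prefix_max (\<lambda>k. norm (pol (y k) - pol' (y k))) t)"
proof -
  define D where "D k = (if k < t then pol (y k) - pol' (y k) else 0)" for k
  have "traj f pol' xi D t = y t"
    unfolding y by (rule traj_as_perturbed) (simp add: D_def y)
  moreover have "\<forall>s. norm (D s) \<le> eta"
    using small \<open>0 \<le> eta\<close> by (simp add: D_def)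
  moreover have "max_pert D t = prefix_max (\<lambda>k. norm (pol (y k) - pol' (y k))) t"
    unfolding max_pert_eq_prefix_max by (rule prefix_max_cong) (simp add: D_def)
  ultimately show ?thesis
    using local_dISS_with_same_initial[OF iss \<open>xi \<in> X\<close>, of D t] by (simp add: norm_minus_commute)
qed

text \<open>In the application \<open>e\<close> is the gap between the trajectories, \<open>p\<close> the size of the perturbation,
  \<open>d\<close> the mismatch along the expert trajectory, \<open>a = \<mu> d^(1+r)\<close> and \<open>h\<close> the inverse of \<open>d \<mapsto> a\<close>.\<close>
lemma gap_le_prefix_max:
  fixes e p d a :: "nat \<Rightarrow> real" and h :: "real \<Rightarrow> real"
  assumes K: "class_K g" and "0 \<le> c"
    and gain: "\<And>t. t \<le> T \<Longrightarrow> (\<And>k. k < t \<Longrightarrow> p k \<le> eta) \<Longrightarrow> e t \<le> g (prefix_max p t)"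
    and p_nonneg: "\<And>k. 0 \<le> p k" and p_le: "\<And>k. p k \<le> d k + c * e k"
    and a_nonneg: "\<And>k. 0 \<le> a k" and d_le: "\<And>k m. a k \<le> m \<Longrightarrow> d k \<le> h m"
    and h_nonneg: "\<And>m. 0 \<le> h m"
    and radius: "\<And>k. k < T \<Longrightarrow> d k + c * prefix_max a k \<le> eta"
    and "0 \<le> alpha" and a_le: "\<And>k. k < T \<Longrightarrow> a k \<le> alpha"
    and inv: "\<And>m. 0 \<le> m \<Longrightarrow> m \<le> alpha \<Longrightarrow> ereal (c * m + h m) \<le> gamma_inv g m"
    and "t \<le> T"
  shows "e t \<le> prefix_max a t"
  using \<open>t \<le> T\<close>
proof (induction t rule: less_induct)
  case (less t)
  define m where "m = prefix_max a t"
  have "0 \<le> m"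
    unfolding m_def using a_nonneg by (rule prefix_max_nonneg)
  have "m \<le> alpha"
    unfolding m_def using less.prems a_le \<open>0 \<le> alpha\<close> by (intro prefix_max_least) auto
  have p_small: "p k \<le> eta" and p_le_m: "p k \<le> c * m + h m" if "k < t" for k
  proof -
    have gap_k: "e k \<le> prefix_max a k"
      using less that by simp
    then have "c * e k \<le> c * prefix_max a k"
      using \<open>0 \<le> c\<close> by (rule mult_left_mono)
    then show "p k \<le> eta"
      using p_le[of k] radius[of k] that less.prems by linarith
    have "prefix_max a k \<le> m"
      unfolding m_def using a_nonneg by (rule prefix_max_mono) (use that in simp)
    with gap_k have "c * e k \<le> c * m"
      using \<open>0 \<le> c\<close> by (intro mult_left_mono) auto
    moreover have "d k \<le> h m"
      using d_le prefix_max_ge[OF that] unfolding m_def by blast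
    ultimately show "p k \<le> c * m + h m"
      using p_le[of k] by linarith
  qed
  have "ereal (prefix_max p t) \<le> ereal (c * m + h m)"
    using p_le_m \<open>0 \<le> c\<close> \<open>0 \<le> m\<close> h_nonneg[of m] by (simp, intro prefix_max_least) auto
  also have "\<dots> \<le> gamma_inv g m"
    using \<open>0 \<le> m\<close> \<open>m \<le> alpha\<close> by (rule inv)
  finally have "g (prefix_max p t) \<le> m"
    by (rule le_of_le_gamma_inv[OF K \<open>0 \<le> m\<close> prefix_max_nonneg[OF p_nonneg]])
  then show ?case
    using gain[OF less.prems p_small] by (simp add: m_def)
qed

theorem theorem1:
  fixes f :: "'a::euclidean_space \<Rightarrow> 'b::euclidean_space \<Rightarrow> 'a"
    and pol pol_star :: "'a \<Rightarrow> 'b"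
    and X :: "'a set" and xi :: 'a
    and L eta r mu alpha :: real and T :: nat
    and beta :: "real \<Rightarrow> nat \<Rightarrow> real" and gamma :: "real \<Rightarrow> real"
  assumes "compact X" and "xi \<in> X"
    and "L \<ge> 0"
    and "\<forall>x y. norm (pol x - pol y) \<le> L * norm (x - y)"
    and "\<forall>x y. norm (pol_star x - pol_star y) \<le> L * norm (x - y)"
    and "eta > 0"
    and "local_dISS_with f pol_star X eta beta gamma"
    and "r > 0"
    and "gamma \<in> O[at_right 0](\<lambda>x. x powr (1 + r))"
    and "mu > 0" and "alpha > 0"
    and "\<forall>x. 0 \<le> x \<and> x \<le> alpha \<longrightarrow>
           ereal (2 * L * x + (x / mu) powr (1 / (1 + r))) \<le> gamma_inv gamma x"
    and "\<forall>t<T. mu * norm (pol (traj f pol_star xi (\<lambda>_. 0) t) - pol_star (traj f pol_star xi (\<lambda>_. 0) t)) powr (1 + r) \<le> alpha"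
    and "\<forall>t<T. 2 * L * mu * norm (pol (traj f pol_star xi (\<lambda>_. 0) t) - pol_star (traj f pol_star xi (\<lambda>_. 0) t)) powr (1 + r)
              + norm (pol (traj f pol_star xi (\<lambda>_. 0) t) - pol_star (traj f pol_star xi (\<lambda>_. 0) t)) \<le> eta"
  shows "\<forall>t. 1 \<le> t \<and> t \<le> T \<longrightarrow>
           norm (traj f pol_star xi (\<lambda>_. 0) t - traj f pol xi (\<lambda>_. 0) t)
             \<le> Max ((\<lambda>k. mu * norm (pol (traj f pol_star xi (\<lambda>_. 0) k) - pol_star (traj f pol_star xi (\<lambda>_. 0) k)) powr (1 + r)) ` {..<t})"
proof -
  define x where "x = traj f pol_star xi (\<lambda>_. 0)"
  define y where "y = traj f pol xi (\<lambda>_. 0)"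
  define d where "d k = norm (pol (x k) - pol_star (x k))" for k
  define a where "a k = mu * d k powr (1 + r)" for k
  have a_nonneg: "0 \<le> a k" for k
    using \<open>mu > 0\<close> by (simp add: a_def)
  have radius: "d k + 2 * L * prefix_max a k \<le> eta" if "k < T" for k
  proof (rule add_scaled_prefix_max_le[OF _ a_nonneg _ _ that])
    show "a i \<le> a j" if "d i \<le> d j" for i j
      using that \<open>mu > 0\<close> \<open>r > 0\<close> by (auto simp: a_def d_def intro: powr_mono2)
    show "d i + 2 * L * a i \<le> eta" if "i < T" for i
      using assms(14) that by (simp add: a_def d_def x_def algebra_simps)
  qed (use \<open>L \<ge> 0\<close> in simp)
  have gap: "norm (x t - y t) \<le> prefix_max a t" if "t \<le> T" for t
  proof (rule gap_le_prefix_max[OF _ _ _ _ _ a_nonneg _ _ radius _ _ _ that])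
    show "class_K gamma"
      using assms(7) by (simp add: local_dISS_with_def)
    show "norm (x t - y t) \<le> gamma (prefix_max (\<lambda>k. norm (pol (y k) - pol_star (y k))) t)"
      if "\<And>k. k < t \<Longrightarrow> norm (pol (y k) - pol_star (y k)) \<le> eta" for t
      unfolding x_def using local_dISS_with_policy_gap[OF assms(7,2) _ y_def] that \<open>eta > 0\<close> by simp
    show "norm (pol (y k) - pol_star (y k)) \<le> d k + 2 * L * norm (x k - y k)" for k
      using norm_mismatch_le[of pol L pol_star] assms(4,5) by (simp add: d_def dist_norm)
    show "d k \<le> (m / mu) powr (1 / (1 + r))" if "a k \<le> m" for k m
      using that \<open>mu > 0\<close> \<open>r > 0\<close> by (intro le_root_of_scaled_powr_le) (auto simp: a_def d_def)
    show "a k \<le> alpha" if "k < T" for k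
      using assms(13) that by (simp add: a_def d_def x_def)
  qed (use assms(3,11,12) in auto)
  have "norm (x t - y t) \<le> Max (a ` {..<t})" if "1 \<le> t" "t \<le> T" for t
    using gap[OF \<open>t \<le> T\<close>] \<open>1 \<le> t\<close> by (simp add: prefix_max_def)
  then show ?thesis
    unfolding x_def y_def a_def[abs_def] d_def by blast
qed

end
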